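(* Let $n\geq 2$ and let $\mathbb{H}^{n}\times\mathbb{R}=\{(x,t)\in\mathbb{R}^{n}\times\mathbb{R}: x=(x_1,\dots,x_n),\ x_n>0\}$ be endowed with the metric $g=\frac{1}{x_{n}^{2}}\sum_{i=1}^{n}dx_{i}^{2}+dt^{2}$. Let $0<m<\infty$ be a constant, let $f$ be a smooth function on $\mathbb{H}^{n}\times\mathbb{R}$ and let $\lambda$ be a constant such that $$Ric+\nabla^{2}f-\frac{1}{m}\,df\otimes df=\lambda g,$$ where $Ric$ is the Ricci tensor of $g$ and $\nabla^2 f$ the Hessian of $f$ with respect to $g$. Then $\lambda=-(n-1)$ and, up to an additive constant, either $$f(x,t)=\pm\sqrt{(n-1)m}\;t,$$ or $$f(x,t)=-m\ln\big(\cosh(\eta t+a)\big)\quad\text{for some constant } a\in\mathbb{R},\ \text{where } \eta=\sqrt{\tfrac{n-1}{m}}.$$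
   Context: A Riemannian manifold $(M,g)$ with a smooth function $f$ and constants $m$, $\lambda$ satisfying $Ric+\nabla^{2}f-\frac{1}{m}df\otimes df=\lambda g$ is called a (gradient) quasi-Einstein metric. *)

theory Defs
  imports "HOL-Analysis.Analysis"
begin

text \<open>Coordinate Riemannian geometry on open subsets of R^d (d = CARD('d)).
  Metric: a matrix-valued function g p.\<close>

definition pd :: "'d::finite \<Rightarrow> (real^'d \<Rightarrow> real) \<Rightarrow> real^'d \<Rightarrow> real" where
  "pd i F p = frechet_derivative F (at p) (axis i 1)"

fun iter_pd :: "'d::finite list \<Rightarrow> (real^'d \<Rightarrow> real) \<Rightarrow> real^'d \<Rightarrow> real" where
  "iter_pd [] F = F"
| "iter_pd (i # is) F = pd i (iter_pd is F)"

definition smooth_on :: "(real^'d::finite) set \<Rightarrow> (real^'d \<Rightarrow> real) \<Rightarrow> bool" where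
  "smooth_on U F \<longleftrightarrow> (\<forall>is. \<forall>p\<in>U. iter_pd is F differentiable (at p))"

definition christoffel :: "(real^'d \<Rightarrow> real^'d^'d) \<Rightarrow> 'd::finite \<Rightarrow> 'd \<Rightarrow> 'd \<Rightarrow> real^'d \<Rightarrow> real" where
  "christoffel g k i j p = (1/2) * (\<Sum>l\<in>UNIV. matrix_inv (g p) $ k $ l *
      (pd i (\<lambda>q. g q $ j $ l) p + pd j (\<lambda>q. g q $ i $ l) p - pd l (\<lambda>q. g q $ i $ j) p))"

definition ricci :: "(real^'d \<Rightarrow> real^'d^'d) \<Rightarrow> 'd::finite \<Rightarrow> 'd \<Rightarrow> real^'d \<Rightarrow> real" where
  "ricci g i j p =
     (\<Sum>k\<in>UNIV. pd k (christoffel g k i j) p - pd j (christoffel g k i k) p)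
   + (\<Sum>k\<in>UNIV. \<Sum>l\<in>UNIV. christoffel g k k l p * christoffel g l i j p
                          - christoffel g k j l p * christoffel g l i k p)"

definition hessian :: "(real^'d \<Rightarrow> real^'d^'d) \<Rightarrow> (real^'d \<Rightarrow> real) \<Rightarrow> 'd::finite \<Rightarrow> 'd \<Rightarrow> real^'d \<Rightarrow> real" where
  "hessian g F i j p = pd i (pd j F) p - (\<Sum>k\<in>UNIV. christoffel g k i j p * pd k F p)"

definition quasi_einstein :: "(real^'d \<Rightarrow> real^'d^'d) \<Rightarrow> (real^'d::finite) set \<Rightarrow> (real^'d \<Rightarrow> real) \<Rightarrow> real \<Rightarrow> real \<Rightarrow> bool" where
  "quasi_einstein g U f m lam \<longleftrightarrow>
     (\<forall>p\<in>U. \<forall>i j. ricci g i j p + hessian g f i j p - (1/m) * pd i f p * pd j f p = lam * g p $ i $ j)"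

text \<open>H^n x R: coordinate xn is the half-space coordinate x_n, coordinate tt is t.
  Metric g = (1/x_n^2) sum_i dx_i^2 + dt^2.\<close>
definition hypR_metric :: "'d::finite \<Rightarrow> 'd \<Rightarrow> real^'d \<Rightarrow> real^'d^'d" where
  "hypR_metric xn tt p = (\<chi> i j. if i = j then (if i = tt then 1 else 1 / (p $ xn)^2) else 0)"

definition hypR_domain :: "'d::finite \<Rightarrow> (real^'d) set" where
  "hypR_domain xn = {p. p $ xn > 0}"

end

theory Submission
  imports Defs
begin

text \<open>
  Write \<open>y = x\<^sub>n\<close> and \<open>u = exp (- f / m)\<close>. The Christoffel symbols of \<open>g\<close> are constants divided
  by \<open>y\<close>, the Ricci tensor is \<open>- (n - 1)\<close> times the hyperbolic part of \<open>g\<close>, and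
  \<open>\<nabla>\<^sup>2f - df \<otimes> df / m = - m \<nabla>\<^sup>2u / u\<close>, so the equation becomes linear in \<open>u\<close>.

  The \<open>(t, y)\<close> component says that \<open>u \<partial>\<^sub>y f\<close> does not depend on \<open>t\<close>. If \<open>\<lambda> \<noteq> - (n - 1)\<close>,
  comparing the \<open>(y, y)\<close> component at points that differ only in \<open>t\<close> shows that \<open>f\<close> does not
  depend on \<open>t\<close>, so the \<open>(t, t)\<close> component gives \<open>\<lambda> = 0\<close>; but then \<open>s \<mapsto> u\<close> at height
  \<open>y = e\<^sup>s\<close> is a positive function on \<open>\<real>\<close> with negative second derivative, which is impossible.
  Hence \<open>\<lambda> = - (n - 1)\<close>. Then \<open>y u \<partial>\<^sub>y f\<close> does not depend on \<open>y\<close>, while differentiating the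
  analogous scaling law for \<open>u \<partial>\<^sub>i f\<close> along a third coordinate \<open>x\<^sub>i\<close> (this is where \<open>n \<ge> 2\<close> is
  used) shows that \<open>u \<partial>\<^sub>y f\<close> does not depend on \<open>y\<close> either. So \<open>\<partial>\<^sub>y f = 0\<close>, then \<open>\<partial>\<^sub>i f = 0\<close>,
  and \<open>f\<close> depends on \<open>t\<close> only. Finally \<open>u'' = ((n - 1) / m) u\<close> with \<open>u > 0\<close> forces
  \<open>u = \<alpha> e\<^sup>\<eta>\<^sup>t + \<beta> e\<^sup>-\<^sup>\<eta>\<^sup>t\<close> with \<open>\<alpha>, \<beta> \<ge> 0\<close>, which gives the three cases.
\<close>

section \<open>Partial derivatives\<close>

lemma pd_eqI:
  assumes "(G has_derivative G') (at p)" "open S" "p \<in> S" "\<And>q. q \<in> S \<Longrightarrow> F q = G q"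
  shows "pd i F p = G' (axis i 1)"
proof -
  have "(F has_derivative G') (at p)"
    by (rule has_derivative_transform_within_open[OF assms(1-3)]) (use assms(4) in auto)
  then show ?thesis
    unfolding pd_def using frechet_derivative_at by metis
qed

lemma pd_comp_component:
  assumes "(\<phi> has_real_derivative D) (at (p $ k))" "open S" "p \<in> S" "\<And>q. q \<in> S \<Longrightarrow> F q = \<phi> (q $ k)"
  shows "pd i F p = (if i = k then D else 0)"
proof -
  have "((\<lambda>q. \<phi> (q $ k)) has_derivative (\<lambda>h. D * h $ k)) (at p)"
    using diff_chain_at[OF bounded_linear_imp_has_derivative[OF bounded_linear_vec_nth[of k]]
        assms(1)[unfolded has_field_derivative_def]]
    by (simp add: o_def mult.commute)
  from pd_eqI[OF this assms(2-4)] show ?thesis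
    by (simp add: axis_def)
qed

lemma has_real_derivative_along_line:
  fixes F :: "real^'d \<Rightarrow> real"
  assumes "F differentiable (at (p + s *\<^sub>R v))"
  shows "((\<lambda>s. F (p + s *\<^sub>R v)) has_real_derivative frechet_derivative F (at (p + s *\<^sub>R v)) v) (at s)"
proof -
  have line: "((\<lambda>s. p + s *\<^sub>R v) has_derivative (\<lambda>h. h *\<^sub>R v)) (at s)"
    by (auto intro!: derivative_eq_intros)
  have F': "(F has_derivative frechet_derivative F (at (p + s *\<^sub>R v))) (at (p + s *\<^sub>R v))"
    using assms frechet_derivative_works by blast
  have "((\<lambda>s. F (p + s *\<^sub>R v)) has_derivative (\<lambda>h. frechet_derivative F (at (p + s *\<^sub>R v)) (h *\<^sub>R v))) (at s)"
    using diff_chain_at[OF line F'] by (simp add: o_def)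
  moreover have "frechet_derivative F (at (p + s *\<^sub>R v)) (h *\<^sub>R v) = frechet_derivative F (at (p + s *\<^sub>R v)) v * h" for h
    using linear_cmul[OF has_derivative_linear[OF F']] by simp
  ultimately show ?thesis
    by (simp add: has_field_derivative_def)
qed

lemma has_real_derivative_pd_along_axis:
  fixes F :: "real^'d \<Rightarrow> real"
  assumes "F differentiable (at (p + s *\<^sub>R axis i 1))"
  shows "((\<lambda>s. F (p + s *\<^sub>R axis i 1)) has_real_derivative pd i F (p + s *\<^sub>R axis i 1)) (at s)"
  using has_real_derivative_along_line[OF assms] unfolding pd_def .

lemma pd_eq_0_if_constant_along_axis:
  fixes F :: "real^'d \<Rightarrow> real"
  assumes "F differentiable (at p)" "\<And>s. F (p + s *\<^sub>R axis i 1) = F p"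
  shows "pd i F p = 0"
proof -
  have "((\<lambda>s. F (p + s *\<^sub>R axis i 1)) has_real_derivative pd i F p) (at 0)"
    using has_real_derivative_pd_along_axis[of F p 0 i] assms(1) by simp
  with assms(2) show ?thesis
    by (simp add: DERIV_const DERIV_unique)
qed

lemma frechet_derivative_pd_expansion:
  fixes F :: "real^'d \<Rightarrow> real"
  assumes "F differentiable (at p)"
  shows "frechet_derivative F (at p) v = (\<Sum>i\<in>UNIV. v $ i * pd i F p)"
proof -
  have lin: "linear (frechet_derivative F (at p))"
    using assms frechet_derivative_works has_derivative_linear by blast
  have "frechet_derivative F (at p) v = frechet_derivative F (at p) (\<Sum>i\<in>UNIV. v $ i *\<^sub>R axis i 1)"
    using basis_expansion[of v] by (simp add: scalar_mult_eq_scaleR)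
  also have "\<dots> = (\<Sum>i\<in>UNIV. v $ i * pd i F p)"
    unfolding pd_def by (simp add: linear_sum[OF lin] linear_cmul[OF lin])
  finally show ?thesis .
qed

lemma has_real_derivative_exp_along_axis:
  fixes f :: "real^'d \<Rightarrow> real" and p :: "real^'d" and s :: real and i :: 'd
  defines "q \<equiv> p + s *\<^sub>R axis i 1"
  assumes "f differentiable (at q)"
  shows "((\<lambda>s. exp (- f (p + s *\<^sub>R axis i 1) / m)) has_real_derivative - exp (- f q / m) * pd i f q / m) (at s)"
proof -
  have "((\<lambda>s. - f (p + s *\<^sub>R axis i 1) / m) has_real_derivative - pd i f q / m) (at s)"
    using DERIV_cdivide[OF DERIV_minus[OF has_real_derivative_pd_along_axis], of f p s i m] assms
    by (simp add: q_def)
  from DERIV_fun_exp[OF this] show ?thesis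
    by (simp add: q_def)
qed

text \<open>With \<open>u = exp (- f / m)\<close> one has \<open>u \<partial>\<^sub>j f = - m \<partial>\<^sub>j u\<close>, so the derivative below is
  \<open>- m \<partial>\<^sub>i \<partial>\<^sub>j u\<close>: this is what makes the quasi-Einstein equation linear in \<open>u\<close>.\<close>
lemma has_real_derivative_weighted_pd:
  fixes f :: "real^'d \<Rightarrow> real" and p :: "real^'d" and s :: real and i :: 'd
  defines "q \<equiv> p + s *\<^sub>R axis i 1"
  assumes "f differentiable (at q)" "pd j f differentiable (at q)"
  shows "((\<lambda>s. exp (- f (p + s *\<^sub>R axis i 1) / m) * pd j f (p + s *\<^sub>R axis i 1)) has_real_derivative
     exp (- f q / m) * (pd i (pd j f) q - pd i f q * pd j f q / m)) (at s)"
proof -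
  have "((\<lambda>s. exp (- f (p + s *\<^sub>R axis i 1) / m) * pd j f (p + s *\<^sub>R axis i 1)) has_real_derivative
     - exp (- f q / m) * pd i f q / m * pd j f q + exp (- f q / m) * pd i (pd j f) q) (at s)"
    using DERIV_mult'[OF has_real_derivative_exp_along_axis has_real_derivative_pd_along_axis] assms
    by (simp add: q_def)
  then show ?thesis
    by (simp add: algebra_simps)
qed

section \<open>The curvature of \<open>H\<^sup>n \<times> \<real>\<close>\<close>

lemma matrix_inv_eqI:
  fixes A B :: "real^'n^'n"
  assumes "A ** B = mat 1" "B ** A = mat 1"
  shows "matrix_inv A = B"
proof -
  have "A ** matrix_inv A = mat 1"
    using someI_ex[of "\<lambda>B. A ** B = mat 1 \<and> B ** A = mat 1"] assms
    unfolding matrix_inv_def by blast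
  then have "matrix_inv A = (B ** A) ** matrix_inv A"
    using assms by (simp add: matrix_mul_lid)
  also have "\<dots> = B"
    using \<open>A ** matrix_inv A = mat 1\<close> by (simp add: matrix_mul_assoc[symmetric])
  finally show ?thesis .
qed

lemma matrix_inv_diagonal:
  fixes d :: "'n::finite \<Rightarrow> real"
  assumes "\<And>i. d i \<noteq> 0"
  shows "matrix_inv (\<chi> i j. if i = j then d i else 0) = (\<chi> i j. if i = j then inverse (d i) else 0)"
proof (rule matrix_inv_eqI)
  have "(\<Sum>k\<in>UNIV. (if i = k then c i else 0) * (if k = j then c' k else 0)) = (if i = j then c i * c' i else 0)"
    for c c' :: "'n \<Rightarrow> real" and i j
    by (simp add: if_distrib[of "\<lambda>x. x * _"] cong: if_cong)
  from this[where c = d and c' = "\<lambda>i. inverse (d i)"] this[where c = "\<lambda>i. inverse (d i)" and c' = d] assms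
  show "(\<chi> i j. if i = j then d i else 0) ** (\<chi> i j. if i = j then inverse (d i) else 0) = mat 1"
    and "(\<chi> i j. if i = j then inverse (d i) else 0) ** (\<chi> i j. if i = j then d i else 0) = mat 1"
    by (simp_all add: matrix_matrix_mult_def mat_def vec_eq_iff)
qed

lemma open_component_ne: "open {q::real^'d. q $ k \<noteq> 0}"
  by (rule open_Collect_neq) (auto intro: continuous_on_component)

lemma matrix_inv_hypR_metric:
  assumes "p $ xn \<noteq> 0"
  shows "matrix_inv (hypR_metric xn tt p) = (\<chi> i j. if i = j then (if i = tt then 1 else (p $ xn)^2) else 0)"
  using matrix_inv_diagonal[of "\<lambda>i. if i = tt then 1 else 1 / (p $ xn)^2"] assms
  by (simp add: hypR_metric_def if_distrib[of inverse] cong: if_cong)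

lemma pd_hypR_metric:
  assumes "p $ xn \<noteq> 0"
  shows "pd k (\<lambda>q. hypR_metric xn tt q $ i $ j) p = - 2 / (p $ xn)^3 * of_bool (i = j \<and> i \<noteq> tt \<and> k = xn)"
proof -
  have "((\<lambda>y. if i = j \<and> i \<noteq> tt then 1 / y^2 else of_bool (i = j)) has_real_derivative
      (if i = j \<and> i \<noteq> tt then - 2 / (p $ xn)^3 else 0)) (at (p $ xn))"
    using assms by (cases "i = j \<and> i \<noteq> tt")
      (auto intro!: derivative_eq_intros simp: power2_eq_square power3_eq_cube field_simps)
  from pd_comp_component[OF this open_component_ne] assms show ?thesis
    by (auto simp: hypR_metric_def)
qed

definition hypR_gamma :: "'d \<Rightarrow> 'd \<Rightarrow> 'd \<Rightarrow> 'd \<Rightarrow> 'd \<Rightarrow> real" where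
  "hypR_gamma xn tt k i j =
     (if i \<noteq> tt \<and> j \<noteq> tt \<and> k \<noteq> tt
      then of_bool (i = j \<and> k = xn) - of_bool (j = k \<and> i = xn) - of_bool (i = k \<and> j = xn) else 0)"

lemma christoffel_hypR_metric:
  assumes "xn \<noteq> tt" "p $ xn \<noteq> 0"
  shows "christoffel (hypR_metric xn tt) k i j p = hypR_gamma xn tt k i j / p $ xn"
proof -
  have "christoffel (hypR_metric xn tt) k i j p = 1/2 * (\<Sum>l\<in>UNIV. if l = k then (if k = tt then 1 else (p $ xn)^2) *
      (pd i (\<lambda>q. hypR_metric xn tt q $ j $ l) p + pd j (\<lambda>q. hypR_metric xn tt q $ i $ l) p
       - pd l (\<lambda>q. hypR_metric xn tt q $ i $ j) p) else 0)"
    unfolding christoffel_def matrix_inv_hypR_metric[OF assms(2)]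
    by (intro arg_cong[where f = "\<lambda>x. 1/2 * x"] sum.cong) auto
  also have "\<dots> = 1/2 * ((if k = tt then 1 else (p $ xn)^2) *
      (pd i (\<lambda>q. hypR_metric xn tt q $ j $ k) p + pd j (\<lambda>q. hypR_metric xn tt q $ i $ k) p
       - pd k (\<lambda>q. hypR_metric xn tt q $ i $ j) p))"
    by simp
  also have "\<dots> = hypR_gamma xn tt k i j / p $ xn"
  proof (cases "k = tt")
    case False
    have scale: "1/2 * (y^2 * (- 2 / y^3 * A + - 2 / y^3 * B - - 2 / y^3 * C)) = (C - A - B) / y"
      if "y \<noteq> 0" for y A B C :: real
      using that by (simp add: field_simps power2_eq_square power3_eq_cube)
    have "of_bool (i = j \<and> i \<noteq> tt \<and> k = xn) - of_bool (j = k \<and> j \<noteq> tt \<and> i = xn)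
        - of_bool (i = k \<and> i \<noteq> tt \<and> j = xn) = hypR_gamma xn tt k i j"
      using False assms(1) by (auto simp: hypR_gamma_def)
    then show ?thesis
      unfolding pd_hypR_metric[OF assms(2)] if_not_P[OF False] scale[OF assms(2)] by simp
  next
    case True
    with assms show ?thesis
      by (simp add: pd_hypR_metric hypR_gamma_def)
  qed
  finally show ?thesis .
qed

lemma pd_christoffel_hypR_metric:
  assumes "xn \<noteq> tt" "p $ xn \<noteq> 0"
  shows "pd l (christoffel (hypR_metric xn tt) k i j) p = (if l = xn then - hypR_gamma xn tt k i j / (p $ xn)^2 else 0)"
proof -
  have "((\<lambda>y. hypR_gamma xn tt k i j / y) has_real_derivative - hypR_gamma xn tt k i j / (p $ xn)^2) (at (p $ xn))"
    using assms by (auto intro!: derivative_eq_intros simp: power2_eq_square field_simps)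
  from pd_comp_component[OF this open_component_ne] assms show ?thesis
    by (auto simp: christoffel_hypR_metric)
qed

lemma sum_of_bool_neq: "(\<Sum>k\<in>UNIV. of_bool (k \<noteq> c) :: real) = real CARD('d::finite) - 1"
  for c :: "'d::finite"
proof -
  have "(\<Sum>k\<in>UNIV. of_bool (k \<noteq> c) :: real) = (\<Sum>k\<in>UNIV - {c}. 1)"
    by (rule sum.mono_neutral_cong_right) auto
  then show ?thesis by simp
qed

lemma sum_pair_delta:
  "(\<Sum>k\<in>UNIV. \<Sum>l\<in>UNIV. if k = x \<and> l = y then c else 0) = (c :: 'a::comm_monoid_add)"
  for x y :: "'d::finite"
proof -
  have "(\<Sum>l\<in>UNIV. if k = x \<and> l = y then c else 0) = (if k = x then c else 0)" for k
    by (cases "k = x") simp_all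
  then show ?thesis by simp
qed

lemma hypR_gamma_xn:
  "xn \<noteq> tt \<Longrightarrow> hypR_gamma xn tt xn i j = of_bool (i \<noteq> tt \<and> j \<noteq> tt) * (of_bool (i = j) - 2 * of_bool (i = xn \<and> j = xn))"
  by (auto simp: hypR_gamma_def)

lemma hypR_gamma_trace:
  fixes xn tt :: "'d::finite"
  assumes "xn \<noteq> tt"
  shows "(\<Sum>k\<in>UNIV. hypR_gamma xn tt k i k) = - (real CARD('d) - 1) * of_bool (i = xn)"
    and "(\<Sum>k\<in>UNIV. hypR_gamma xn tt k k i) = - (real CARD('d) - 1) * of_bool (i = xn)"
proof -
  have "hypR_gamma xn tt k i k = - of_bool (k \<noteq> tt) * of_bool (i = xn)"
    and "hypR_gamma xn tt k k i = - of_bool (k \<noteq> tt) * of_bool (i = xn)" for k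
    using assms by (auto simp: hypR_gamma_def)
  then show "(\<Sum>k\<in>UNIV. hypR_gamma xn tt k i k) = - (real CARD('d) - 1) * of_bool (i = xn)"
    and "(\<Sum>k\<in>UNIV. hypR_gamma xn tt k k i) = - (real CARD('d) - 1) * of_bool (i = xn)"
    by (simp_all add: sum_distrib_right[symmetric] sum_negf sum_of_bool_neq)
qed

lemma hypR_gamma_contract:
  fixes xn tt :: "'d::finite"
  assumes "xn \<noteq> tt"
  shows "(\<Sum>k\<in>UNIV. hypR_gamma xn tt k i j * v k) = of_bool (i \<noteq> tt \<and> j \<noteq> tt) *
    (of_bool (i = j) * v xn - of_bool (i = xn) * v j - of_bool (j = xn) * v i)"
proof -
  have "hypR_gamma xn tt k i j * v k = of_bool (i \<noteq> tt \<and> j \<noteq> tt) *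
      ((if k = xn then of_bool (i = j) * v xn else 0) - (if k = j then of_bool (i = xn) * v j else 0)
       - (if k = i then of_bool (j = xn) * v i else 0))" for k
    using assms by (cases "k = xn"; cases "k = tt") (auto simp: hypR_gamma_def)
  then show ?thesis
    by (simp only: sum_distrib_left[symmetric] sum_subtractf sum.delta finite UNIV_I if_True)
qed

lemma hypR_gamma_quadratic:
  fixes xn tt :: "'d::finite"
  assumes "xn \<noteq> tt"
  shows "(\<Sum>k\<in>UNIV. \<Sum>l\<in>UNIV. hypR_gamma xn tt k j l * hypR_gamma xn tt l i k)
    = of_bool (i \<noteq> tt \<and> j \<noteq> tt) * ((real CARD('d) + 1) * of_bool (i = xn \<and> j = xn) - 2 * of_bool (i = j))"
proof -
  consider "i = tt \<or> j = tt \<or> i \<noteq> j" | "i = xn" "j = xn" | "i = j" "i \<noteq> tt" "i \<noteq> xn"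
    by blast
  then show ?thesis
  proof cases
    case 1
    then have vanish: "hypR_gamma xn tt k j l * hypR_gamma xn tt l i k = 0" for k l
      using assms by (cases "k = xn"; cases "l = xn") (auto simp: hypR_gamma_def)
    have "(\<Sum>k\<in>UNIV. \<Sum>l\<in>UNIV. hypR_gamma xn tt k j l * hypR_gamma xn tt l i k) = 0"
      by (intro sum.neutral ballI vanish)
    with 1 show ?thesis by auto
  next
    case 2
    then have "hypR_gamma xn tt k j l * hypR_gamma xn tt l i k = (if l = k then of_bool (k \<noteq> tt) else 0)" for k l
      using assms by (cases "k = xn"; cases "l = xn") (auto simp: hypR_gamma_def)
    with 2 assms show ?thesis by (simp add: sum_of_bool_neq)
  next
    case 3
    then have "hypR_gamma xn tt k j l * hypR_gamma xn tt l i k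
        = - (if k = i \<and> l = xn then 1 else 0) - (if k = xn \<and> l = i then 1 else 0)" for k l
      using assms by (cases "k = xn"; cases "l = xn") (auto simp: hypR_gamma_def)
    with 3 show ?thesis by (simp add: sum_subtractf sum_negf sum_pair_delta)
  qed
qed

lemma ricci_hypR_metric:
  fixes xn tt :: "'d::finite"
  assumes "xn \<noteq> tt" "p $ xn \<noteq> 0"
  shows "ricci (hypR_metric xn tt) i j p = - (real CARD('d) - 2) * of_bool (i = j \<and> i \<noteq> tt) / (p $ xn)^2"
proof -
  let ?C = "hypR_gamma xn tt" and ?\<Gamma> = "christoffel (hypR_metric xn tt)" and ?h = "real CARD('d) - 1"
  have "(\<Sum>k\<in>UNIV. pd k (?\<Gamma> k i j) p - pd j (?\<Gamma> k i k) p)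
      = (- ?C xn i j + of_bool (j = xn) * (\<Sum>k\<in>UNIV. ?C k i k)) / (p $ xn)^2"
    using assms by (simp add: pd_christoffel_hypR_metric sum_subtractf sum_divide_distrib[symmetric] sum_negf
        of_bool_def diff_divide_distrib add_divide_distrib)
  also have "\<dots> = (- ?C xn i j - ?h * of_bool (i = xn \<and> j = xn)) / (p $ xn)^2"
    using assms by (simp add: hypR_gamma_trace)
  finally have linear: "(\<Sum>k\<in>UNIV. pd k (?\<Gamma> k i j) p - pd j (?\<Gamma> k i k) p)
      = (- ?C xn i j - ?h * of_bool (i = xn \<and> j = xn)) / (p $ xn)^2" .
  have "(\<Sum>k\<in>UNIV. \<Sum>l\<in>UNIV. ?\<Gamma> k k l p * ?\<Gamma> l i j p - ?\<Gamma> k j l p * ?\<Gamma> l i k p)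
      = ((\<Sum>k\<in>UNIV. \<Sum>l\<in>UNIV. ?C k k l * ?C l i j)
         - (\<Sum>k\<in>UNIV. \<Sum>l\<in>UNIV. ?C k j l * ?C l i k)) / (p $ xn)^2"
    using assms by (simp add: christoffel_hypR_metric sum_subtractf sum_divide_distrib diff_divide_distrib power2_eq_square)
  also have "(\<Sum>k\<in>UNIV. \<Sum>l\<in>UNIV. ?C k k l * ?C l i j) = (\<Sum>l\<in>UNIV. (\<Sum>k\<in>UNIV. ?C k k l) * ?C l i j)"
    by (subst sum.swap) (simp add: sum_distrib_right)
  also have "\<dots> = - ?h * ?C xn i j"
    using assms by (simp add: hypR_gamma_trace mult.assoc sum_distrib_left[symmetric] of_bool_def
        if_distrib[of "\<lambda>x. x * _"] cong: if_cong)
  also have "(\<Sum>k\<in>UNIV. \<Sum>l\<in>UNIV. ?C k j l * ?C l i k)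
      = of_bool (i \<noteq> tt \<and> j \<noteq> tt) * ((?h + 2) * of_bool (i = xn \<and> j = xn) - 2 * of_bool (i = j))"
    using assms by (simp add: hypR_gamma_quadratic)
  finally have quadratic: "(\<Sum>k\<in>UNIV. \<Sum>l\<in>UNIV. ?\<Gamma> k k l p * ?\<Gamma> l i j p - ?\<Gamma> k j l p * ?\<Gamma> l i k p)
      = (- ?h * ?C xn i j
         - of_bool (i \<noteq> tt \<and> j \<noteq> tt) * ((?h + 2) * of_bool (i = xn \<and> j = xn) - 2 * of_bool (i = j))) / (p $ xn)^2" .
  show ?thesis
    unfolding ricci_def linear quadratic hypR_gamma_xn[OF assms(1)] add_divide_distrib[symmetric]
    using assms(1) by (cases "i = tt"; cases "j = tt"; cases "i = xn"; cases "j = xn"; cases "i = j") (simp_all add: algebra_simps)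
qed

section \<open>Functions of one real variable\<close>

lemma concave_below_tangent:
  fixes \<phi> \<phi>' :: "real \<Rightarrow> real"
  assumes deriv: "\<And>s. (\<phi> has_real_derivative \<phi>' s) (at s)"
    and antimono: "\<And>s t. s < t \<Longrightarrow> \<phi>' t \<le> \<phi>' s"
  shows "\<phi> t \<le> \<phi> s + \<phi>' s * (t - s)"
proof (cases s t rule: linorder_cases)
  case less
  then obtain z where "s < z" "\<phi> t - \<phi> s = (t - s) * \<phi>' z"
    using MVT2[OF less] deriv by blast
  moreover have "(t - s) * \<phi>' z \<le> (t - s) * \<phi>' s"
    using less antimono[OF \<open>s < z\<close>] by (simp add: mult_left_mono)
  ultimately show ?thesis
    by (simp add: algebra_simps)
next
  case greater
  then obtain z where "z < s" "\<phi> s - \<phi> t = (s - t) * \<phi>' z"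
    using MVT2[OF greater] deriv by blast
  moreover have "(s - t) * \<phi>' s \<le> (s - t) * \<phi>' z"
    using greater antimono[OF \<open>z < s\<close>] by (simp add: mult_left_mono)
  ultimately show ?thesis
    by (simp add: algebra_simps)
qed simp

lemma strictly_concave_not_positive:
  fixes \<phi> \<phi>' \<phi>'' :: "real \<Rightarrow> real"
  assumes d1: "\<And>s. (\<phi> has_real_derivative \<phi>' s) (at s)"
    and d2: "\<And>s. (\<phi>' has_real_derivative \<phi>'' s) (at s)"
    and neg: "\<And>s. \<phi>'' s < 0"
  shows "\<exists>t. \<phi> t < 0"
proof -
  have decreasing: "\<phi>' t < \<phi>' s" if "s < t" for s t
    using DERIV_neg_imp_decreasing[OF that] d2 neg by blast
  obtain s where s: "\<phi>' s \<noteq> 0"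
    using decreasing[of 0 1] by (metis less_irrefl zero_less_one)
  define t where "t = s - (\<phi> s + 1) / \<phi>' s"
  have "\<phi> t \<le> \<phi> s + \<phi>' s * (t - s)"
    by (rule concave_below_tangent[OF d1]) (use decreasing in \<open>simp add: less_imp_le\<close>)
  also have "\<dots> = -1"
    using s by (simp add: t_def)
  finally show ?thesis by (intro exI[of _ t]) simp
qed

lemma has_real_derivative_mult_self_imp_exp:
  fixes P :: "real \<Rightarrow> real"
  assumes "\<And>t. (P has_real_derivative c * P t) (at t)"
  shows "P t = P 0 * exp (c * t)"
proof -
  have "((\<lambda>t. P t * exp (- (c * t))) has_real_derivative 0) (at x)" for x
  proof -
    have "((\<lambda>t. P t * exp (- (c * t))) has_real_derivative
        c * P x * exp (- (c * x)) + P x * (exp (- (c * x)) * - c)) (at x)"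
      by (intro derivative_eq_intros) (auto intro: assms)
    then show ?thesis by (simp add: algebra_simps)
  qed
  then have "P t * exp (- (c * t)) = P 0 * exp (- (c * 0))"
    by (rule DERIV_isconst_all[rule_format])
  then show ?thesis
    by (simp add: exp_minus field_simps)
qed

lemma nonneg_if_pos_exp_combination:
  fixes A B :: real
  assumes "\<And>x. 0 < A + B * exp (- x)"
  shows "0 \<le> A"
proof (rule ccontr)
  assume "\<not> 0 \<le> A"
  then have A: "A < 0" by simp
  show False
  proof (cases "0 < B")
    case True
    have "exp (- (- ln (- A / B))) = - A / B"
      using A True by (simp add: divide_neg_pos)
    with assms[of "- ln (- A / B)"] True show False by simp
  next
    case False
    with A assms[of 0] show False by simp
  qed
qed

lemma exp_ode_solution:
  fixes u u' :: "real \<Rightarrow> real"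
  assumes eta: "0 < \<eta>"
    and d1: "\<And>t. (u has_real_derivative u' t) (at t)"
    and d2: "\<And>t. (u' has_real_derivative \<eta>^2 * u t) (at t)"
  obtains \<alpha> \<beta> where "\<And>t. u t = \<alpha> * exp (\<eta> * t) + \<beta> * exp (- (\<eta> * t))"
proof -
  define P where "P t = u' t + \<eta> * u t" for t
  define Q where "Q t = u' t - \<eta> * u t" for t
  have dP: "(P has_real_derivative \<eta> * P t) (at t)" for t
  proof -
    have "(P has_real_derivative \<eta>^2 * u t + \<eta> * u' t) (at t)"
      unfolding P_def[abs_def] by (intro derivative_eq_intros) (auto intro: d1 d2)
    then show ?thesis by (simp add: P_def algebra_simps power2_eq_square)
  qed
  have dQ: "(Q has_real_derivative (- \<eta>) * Q t) (at t)" for t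
  proof -
    have "(Q has_real_derivative \<eta>^2 * u t - \<eta> * u' t) (at t)"
      unfolding Q_def[abs_def] by (intro derivative_eq_intros) (auto intro: d1 d2)
    then show ?thesis by (simp add: Q_def algebra_simps power2_eq_square)
  qed
  have PQ: "P t = P 0 * exp (\<eta> * t)" "Q t = Q 0 * exp (- \<eta> * t)" for t
    by (rule has_real_derivative_mult_self_imp_exp, fact dP dQ)+
  have "u t = P 0 / (2 * \<eta>) * exp (\<eta> * t) + - Q 0 / (2 * \<eta>) * exp (- (\<eta> * t))" for t
  proof -
    have "u t = (P t - Q t) / (2 * \<eta>)"
      using eta by (simp add: P_def Q_def field_simps)
    then show ?thesis
      unfolding PQ[of t] by (simp add: diff_divide_distrib)
  qed
  then show ?thesis
    by (rule that)
qed

lemma positive_solution_exp_ode: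
  fixes u u' :: "real \<Rightarrow> real"
  assumes eta: "0 < \<eta>"
    and d1: "\<And>t. (u has_real_derivative u' t) (at t)"
    and d2: "\<And>t. (u' has_real_derivative \<eta>^2 * u t) (at t)"
    and pos: "\<And>t. 0 < u t"
  obtains \<alpha> \<beta> where "0 \<le> \<alpha>" "0 \<le> \<beta>" "0 < \<alpha> \<or> 0 < \<beta>"
    "\<And>t. u t = \<alpha> * exp (\<eta> * t) + \<beta> * exp (- (\<eta> * t))"
proof -
  obtain \<alpha> \<beta> where u: "\<And>t. u t = \<alpha> * exp (\<eta> * t) + \<beta> * exp (- (\<eta> * t))"
    using exp_ode_solution[OF eta d1 d2] by blast
  have "0 < \<alpha> + \<beta> * exp (- x)" "0 < \<beta> + \<alpha> * exp (- x)" for x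
  proof -
    have e: "\<eta> * (x / (2 * \<eta>)) = x / 2" "\<eta> * (- x / (2 * \<eta>)) = - (x / 2)"
      using eta by simp_all
    have "exp (x / 2) * exp (- (x / 2)) = 1" "exp (- (x / 2)) * exp (- (x / 2)) = exp (- x)"
      by (simp_all flip: exp_add)
    then have "u (x / (2 * \<eta>)) * exp (- (x / 2)) = \<alpha> + \<beta> * exp (- x)"
      "u (- x / (2 * \<eta>)) * exp (- (x / 2)) = \<beta> + \<alpha> * exp (- x)"
      unfolding u e by (simp_all only: distrib_right mult.assoc minus_minus mult_1_right add.commute)
    with pos show "0 < \<alpha> + \<beta> * exp (- x)" "0 < \<beta> + \<alpha> * exp (- x)"
      by (metis exp_gt_zero mult_pos_pos)+
  qed
  then have "0 \<le> \<alpha>" "0 \<le> \<beta>"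
    by (metis nonneg_if_pos_exp_combination)+
  moreover have "0 < \<alpha> \<or> 0 < \<beta>"
    using pos[of 0] \<open>0 \<le> \<alpha>\<close> \<open>0 \<le> \<beta>\<close> unfolding u by auto
  ultimately show ?thesis
    using that u by blast
qed

lemma exp_combination_eq_cosh:
  fixes \<alpha> \<beta> x :: real
  assumes "0 < \<alpha>" "0 < \<beta>"
  shows "\<alpha> * exp x + \<beta> * exp (- x) = 2 * sqrt \<alpha> * sqrt \<beta> * cosh (x + (ln (sqrt \<alpha>) - ln (sqrt \<beta>)))"
proof -
  define a b where "a = sqrt \<alpha>" and "b = sqrt \<beta>"
  have "0 < a" "0 < b" "\<alpha> = a * a" "\<beta> = b * b"
    using assms by (simp_all add: a_def b_def)
  moreover have "2 * cosh (x + (ln a - ln b)) = exp x * a / b + exp (- x) * b / a"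
    using \<open>0 < a\<close> \<open>0 < b\<close> by (simp add: cosh_def exp_add exp_diff exp_minus field_simps)
  ultimately show ?thesis
    unfolding a_def[symmetric] b_def[symmetric] by (simp add: field_simps)
qed

section \<open>Quasi-Einstein metrics on \<open>H\<^sup>n \<times> \<real>\<close>\<close>

locale hypR_quasi_einstein =
  fixes xn tt :: "'d::finite" and f :: "real^'d \<Rightarrow> real" and m lam :: real
  assumes coords: "xn \<noteq> tt"
    and dim: "3 \<le> CARD('d)"
    and m_pos: "0 < m"
    and smooth: "smooth_on (hypR_domain xn) f"
    and qe: "quasi_einstein (hypR_metric xn tt) (hypR_domain xn) f m lam"
begin

abbreviation U where "U \<equiv> hypR_domain xn"

abbreviation u where "u q \<equiv> exp (- f q / m)"

lemma mem_U: "q \<in> U \<longleftrightarrow> 0 < q $ xn"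
  by (simp add: hypR_domain_def)

lemma axis_shift_mem_U: "q \<in> U \<Longrightarrow> i \<noteq> xn \<Longrightarrow> q + s *\<^sub>R axis i 1 \<in> U"
  by (simp add: mem_U axis_def)

lemma differentiable_f: "q \<in> U \<Longrightarrow> f differentiable (at q)"
  using smooth unfolding smooth_on_def by (metis iter_pd.simps(1))

lemma differentiable_pd_f: "q \<in> U \<Longrightarrow> pd j f differentiable (at q)"
  using smooth unfolding smooth_on_def by (metis iter_pd.simps)

lemma qe_components:
  assumes "q \<in> U"
  shows "pd i (pd j f) q - pd i f q * pd j f q / m
     - of_bool (i \<noteq> tt \<and> j \<noteq> tt) * (of_bool (i = j) * pd xn f q - of_bool (i = xn) * pd j f q
       - of_bool (j = xn) * pd i f q) / q $ xn
     = of_bool (i = j) * (if i = tt then lam else (lam + (real CARD('d) - 2)) / (q $ xn)^2)"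
proof -
  have y: "q $ xn \<noteq> 0"
    using assms by (simp add: mem_U)
  have hessian: "hessian (hypR_metric xn tt) f i j q = pd i (pd j f) q - of_bool (i \<noteq> tt \<and> j \<noteq> tt) *
      (of_bool (i = j) * pd xn f q - of_bool (i = xn) * pd j f q - of_bool (j = xn) * pd i f q) / q $ xn"
    unfolding hessian_def christoffel_hypR_metric[OF coords y]
    by (simp add: sum_divide_distrib[symmetric] hypR_gamma_contract[OF coords])
  have "ricci (hypR_metric xn tt) i j q + hessian (hypR_metric xn tt) f i j q - (1/m) * pd i f q * pd j f q
      = lam * hypR_metric xn tt q $ i $ j"
    using qe assms unfolding quasi_einstein_def by blast
  then show ?thesis
    unfolding hessian ricci_hypR_metric[OF coords y] hypR_metric_def
    using y by (cases "i = j"; cases "i = tt") (auto simp: field_simps)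
qed

lemma qe_tt_tt: "q \<in> U \<Longrightarrow> pd tt (pd tt f) q - pd tt f q * pd tt f q / m = lam"
  using qe_components[of q tt tt] by simp

lemma qe_tt_xn: "q \<in> U \<Longrightarrow> pd tt (pd xn f) q - pd tt f q * pd xn f q / m = 0"
  using qe_components[of q tt xn] coords by simp

lemma qe_xn_xn:
  "q \<in> U \<Longrightarrow> pd xn (pd xn f) q - pd xn f q * pd xn f q / m
    = (lam + (real CARD('d) - 2)) / (q $ xn)^2 - pd xn f q / q $ xn"
  using qe_components[of q xn xn] coords by (simp add: algebra_simps)

lemma qe_diag:
  "q \<in> U \<Longrightarrow> b \<noteq> xn \<Longrightarrow> b \<noteq> tt \<Longrightarrow> pd b (pd b f) q - pd b f q * pd b f q / m
    = (lam + (real CARD('d) - 2)) / (q $ xn)^2 + pd xn f q / q $ xn"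
  using qe_components[of q b b] by (simp add: algebra_simps)

lemma qe_xn_off_diag:
  assumes "q \<in> U" "b \<noteq> xn" "b \<noteq> tt"
  shows "pd xn (pd b f) q - pd xn f q * pd b f q / m = - pd b f q / q $ xn"
    and "pd b (pd xn f) q - pd b f q * pd xn f q / m = - pd b f q / q $ xn"
  using qe_components[of q xn b] qe_components[of q b xn] assms coords
  by (simp_all add: algebra_simps)

lemma exists_transverse_coord: obtains b where "b \<noteq> xn" "b \<noteq> tt"
proof -
  have "\<not> UNIV \<subseteq> {xn, tt}"
  proof
    assume "UNIV \<subseteq> {xn, tt}"
    then have "CARD('d) \<le> card {xn, tt}"
      by (simp add: card_mono)
    also have "\<dots> \<le> 2"
      by (simp add: card_insert_le_m1)
    finally show False
      using dim by simp
  qed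
  then show ?thesis
    using that by blast
qed

lemma weighted_pd_xn_tt_invariant:
  assumes "q \<in> U"
  shows "u (q + s *\<^sub>R axis tt 1) * pd xn f (q + s *\<^sub>R axis tt 1) = u q * pd xn f q"
proof -
  have "((\<lambda>s. u (q + s *\<^sub>R axis tt 1) * pd xn f (q + s *\<^sub>R axis tt 1)) has_real_derivative 0) (at x)" for x
    using has_real_derivative_weighted_pd[of f q x tt xn m] axis_shift_mem_U[OF assms, of tt x] coords
    by (simp add: differentiable_f differentiable_pd_f qe_tt_xn)
  from DERIV_isconst_all[OF allI[OF this], of s 0] show ?thesis
    by simp
qed

lemma tt_invariant_if_lam_ne:
  assumes lam: "lam + (real CARD('d) - 2) \<noteq> 0" and q: "q \<in> U"
  shows "f (q + s *\<^sub>R axis tt 1) = f q"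
proof -
  define q' where "q' = q + s *\<^sub>R axis tt 1"
  have q': "q' \<in> U" "q' $ xn = q $ xn"
    unfolding q'_def using axis_shift_mem_U[OF q] coords by (auto simp: axis_def)
  define W where "W p r = u (p + r *\<^sub>R axis xn 1) * pd xn f (p + r *\<^sub>R axis xn 1)" for p r
  have W': "(W p has_real_derivative u p * ((lam + (real CARD('d) - 2)) / (q $ xn)^2 - pd xn f p / q $ xn)) (at 0)"
    if "p \<in> U" "p $ xn = q $ xn" for p
    using has_real_derivative_weighted_pd[of f p 0 xn xn m] that
    by (simp add: W_def[abs_def] differentiable_f differentiable_pd_f qe_xn_xn)
  have "W q' r = W q r" if "r \<in> {r. - (q $ xn) < r}" for r
  proof -
    have shift: "q' + r *\<^sub>R axis xn 1 = (q + r *\<^sub>R axis xn 1) + s *\<^sub>R axis tt 1"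
      unfolding q'_def by (simp add: algebra_simps)
    have "q + r *\<^sub>R axis xn 1 \<in> U"
      using that by (simp add: mem_U axis_def)
    then show ?thesis
      unfolding W_def shift by (rule weighted_pd_xn_tt_invariant)
  qed
  then have "(W q has_real_derivative u q' * ((lam + (real CARD('d) - 2)) / (q $ xn)^2 - pd xn f q' / q $ xn)) (at 0)"
    using has_field_derivative_transform_within_open[OF W'[OF q'], of "{r. - (q $ xn) < r}"] q
    by (simp add: open_Collect_less mem_U)
  with W'[OF q] have "u q * ((lam + (real CARD('d) - 2)) / (q $ xn)^2 - pd xn f q / q $ xn)
      = u q' * ((lam + (real CARD('d) - 2)) / (q $ xn)^2 - pd xn f q' / q $ xn)"
    using DERIV_unique by blast
  moreover have "u q' * pd xn f q' = u q * pd xn f q"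
    unfolding q'_def using weighted_pd_xn_tt_invariant[OF q] .
  ultimately have "u q * (lam + (real CARD('d) - 2)) / (q $ xn)^2 = u q' * (lam + (real CARD('d) - 2)) / (q $ xn)^2"
    by (simp add: right_diff_distrib)
  then have "u q = u q'"
    using lam q by (simp add: mem_U)
  then show ?thesis
    using m_pos by (simp add: q'_def)
qed

lemma lam_eq_0_if_lam_ne:
  assumes "lam + (real CARD('d) - 2) \<noteq> 0"
  shows "lam = 0"
proof -
  have pd_tt: "pd tt f p = 0" if "p \<in> U" for p
    using that assms by (intro pd_eq_0_if_constant_along_axis) (simp_all add: differentiable_f tt_invariant_if_lam_ne)
  define q :: "real^'d" where "q = axis xn 1"
  have q: "q \<in> U"
    by (simp add: q_def mem_U)
  have "pd tt (pd tt f) q = 0"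
    using q coords by (intro pd_eq_0_if_constant_along_axis) (simp_all add: differentiable_pd_f pd_tt axis_shift_mem_U)
  with qe_tt_tt[OF q] pd_tt[OF q] show ?thesis
    by simp
qed

lemma u_log_height_ode:
  assumes lam: "lam = 0"
  obtains \<phi>' where "\<And>s. ((\<lambda>s. u (axis xn 1 + (exp s - 1) *\<^sub>R axis xn 1)) has_real_derivative \<phi>' s) (at s)"
    and "\<And>s. (\<phi>' has_real_derivative - ((real CARD('d) - 2) / m) * u (axis xn 1 + (exp s - 1) *\<^sub>R axis xn 1)) (at s)"
proof -
  define q0 :: "real^'d" where "q0 = axis xn 1"
  define P where "P s = q0 + (exp s - 1) *\<^sub>R axis xn 1" for s
  have P: "P s $ xn = exp s" "P s \<in> U" for s
    by (simp_all add: P_def q0_def mem_U axis_def)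
  define \<phi>' where "\<phi>' s = - (u (P s) * pd xn f (P s) * exp s) / m" for s
  have u': "((\<lambda>r. u (q0 + r *\<^sub>R axis xn 1)) has_real_derivative - u (P s) * pd xn f (P s) / m) (at (exp s - 1))" for s
    using has_real_derivative_exp_along_axis[of f q0 "exp s - 1" xn m] differentiable_f[OF P(2)]
    by (simp add: P_def)
  have "((\<lambda>s. u (q0 + (exp s - 1) *\<^sub>R axis xn 1)) has_real_derivative \<phi>' s) (at s)" for s
  proof -
    have "((\<lambda>s. u (q0 + (exp s - 1) *\<^sub>R axis xn 1)) has_real_derivative - u (P s) * pd xn f (P s) / m * exp s) (at s)"
      by (rule DERIV_chain2[where g = "\<lambda>s. exp s - 1", OF u']) (auto intro!: derivative_eq_intros)
    then show ?thesis
      unfolding \<phi>'_def P_def by simp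
  qed
  moreover have "(\<phi>' has_real_derivative - ((real CARD('d) - 2) / m) * u (P s)) (at s)" for s
  proof -
    have W': "((\<lambda>r. u (q0 + r *\<^sub>R axis xn 1) * pd xn f (q0 + r *\<^sub>R axis xn 1)) has_real_derivative
        u (P s) * ((real CARD('d) - 2) / (exp s)^2 - pd xn f (P s) / exp s)) (at (exp s - 1))"
      using has_real_derivative_weighted_pd[of f q0 "exp s - 1" xn xn m] qe_xn_xn[OF P(2)] P(1)
        differentiable_f[OF P(2)] differentiable_pd_f[OF P(2)]
      by (simp add: P_def lam)
    have "((\<lambda>s. u (P s) * pd xn f (P s)) has_real_derivative
        u (P s) * ((real CARD('d) - 2) / (exp s)^2 - pd xn f (P s) / exp s) * exp s) (at s)"
      unfolding P_def
      by (rule DERIV_chain2[where g = "\<lambda>s. exp s - 1", OF W'[unfolded P_def]]) (auto intro!: derivative_eq_intros)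
    from DERIV_cdivide[OF DERIV_minus[OF DERIV_mult'[OF this DERIV_exp]], of m]
    have "(\<phi>' has_real_derivative - (u (P s) * pd xn f (P s) * exp s
        + u (P s) * ((real CARD('d) - 2) / (exp s)^2 - pd xn f (P s) / exp s) * exp s * exp s) / m) (at s)"
      unfolding \<phi>'_def[abs_def] .
    moreover have "- (u (P s) * pd xn f (P s) * exp s
        + u (P s) * ((real CARD('d) - 2) / (exp s)^2 - pd xn f (P s) / exp s) * exp s * exp s) / m
        = - ((real CARD('d) - 2) / m) * u (P s)"
      using m_pos by (simp add: field_simps power2_eq_square)
    ultimately show ?thesis
      by simp
  qed
  ultimately show ?thesis
    using that unfolding P_def q0_def by blast
qed

lemma lam_eq: "lam = - (real CARD('d) - 2)"
proof (rule ccontr)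
  assume "lam \<noteq> - (real CARD('d) - 2)"
  then have "lam = 0"
    by (intro lam_eq_0_if_lam_ne) simp
  from u_log_height_ode[OF this] obtain \<phi>'
    where d1: "\<And>s. ((\<lambda>s. u (axis xn 1 + (exp s - 1) *\<^sub>R axis xn 1)) has_real_derivative \<phi>' s) (at s)"
    and d2: "\<And>s. (\<phi>' has_real_derivative - ((real CARD('d) - 2) / m) * u (axis xn 1 + (exp s - 1) *\<^sub>R axis xn 1)) (at s)"
    by blast
  have "- ((real CARD('d) - 2) / m) * u (axis xn 1 + (exp s - 1) *\<^sub>R axis xn 1) < 0" for s
    using dim m_pos by simp
  from strictly_concave_not_positive[OF d1 d2 this] show False
    by (auto simp: not_less[symmetric])
qed

definition at_height :: "real^'d \<Rightarrow> real \<Rightarrow> real^'d" where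
  "at_height q h = q + (h - q $ xn) *\<^sub>R axis xn 1"

lemma at_height_simps:
  "at_height q h $ xn = h"
  "at_height (at_height q h) h' = at_height q h'"
  "i \<noteq> xn \<Longrightarrow> at_height (q + r *\<^sub>R axis i 1) h = at_height q h + r *\<^sub>R axis i 1"
  by (simp_all add: at_height_def axis_def vec_eq_iff algebra_simps)

lemma at_height_mem_U: "0 < h \<Longrightarrow> at_height q h \<in> U"
  by (simp add: mem_U at_height_simps)

lemma weighted_pd_at_height:
  assumes hj: "\<And>p. p \<in> U \<Longrightarrow> pd xn (pd j f) p - pd xn f p * pd j f p / m = - pd j f p / p $ xn"
    and q: "q \<in> U" and h: "0 < h"
  shows "h * (u (at_height q h) * pd j f (at_height q h)) = q $ xn * (u q * pd j f q)"
proof -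
  define F where "F r = (q $ xn + r) * (u (q + r *\<^sub>R axis xn 1) * pd j f (q + r *\<^sub>R axis xn 1))" for r
  have "(F has_real_derivative 0) (at r)" if r: "r \<in> {- q $ xn <..< \<bar>h - q $ xn\<bar> + 1}" for r
  proof -
    let ?p = "q + r *\<^sub>R axis xn 1"
    have p: "?p \<in> U" "?p $ xn = q $ xn + r"
      using r by (simp_all add: mem_U axis_def)
    have "(F has_real_derivative (q $ xn + r) * (u ?p * (pd xn (pd j f) ?p - pd xn f ?p * pd j f ?p / m))
        + u ?p * pd j f ?p) (at r)"
      unfolding F_def[abs_def]
      using DERIV_mult'[OF DERIV_add[OF DERIV_const DERIV_ident] has_real_derivative_weighted_pd[of f q r xn j m]]
        differentiable_f[OF p(1)] differentiable_pd_f[OF p(1)] by simp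
    moreover have "(q $ xn + r) * (u ?p * (pd xn (pd j f) ?p - pd xn f ?p * pd j f ?p / m)) + u ?p * pd j f ?p = 0"
      unfolding hj[OF p(1)] p(2) using r by (simp add: field_simps)
    ultimately show ?thesis
      by simp
  qed
  then have "F (h - q $ xn) = F 0"
    using q h by (intro DERIV_isconst3[of "- q $ xn" "\<bar>h - q $ xn\<bar> + 1"]) (auto simp: mem_U)
  then show ?thesis
    by (simp add: F_def at_height_def)
qed

text \<open>The height scaling of \<open>u \<partial>\<^sub>b f\<close> holds along a whole line in a transverse direction \<open>b\<close>;
  differentiating it along that line, the \<open>(b, b)\<close> component turns it into a statement about
  \<open>u \<partial>\<^sub>y f\<close>, where \<open>y = x\<^sub>n\<close>.\<close>
lemma weighted_pd_xn_height_invariant: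
  assumes q: "q \<in> U"
  shows "u (at_height q 1) * pd xn f (at_height q 1) = u q * pd xn f q"
proof -
  obtain b where b: "b \<noteq> xn" "b \<noteq> tt"
    using exists_transverse_coord .
  define W where "W p r = u (p + r *\<^sub>R axis b 1) * pd b f (p + r *\<^sub>R axis b 1)" for p r
  have W': "(W p has_real_derivative u p * (pd xn f p / p $ xn)) (at 0)" if "p \<in> U" for p
    using has_real_derivative_weighted_pd[of f p 0 b b m] qe_diag[OF that b] lam_eq
      differentiable_f[OF that] differentiable_pd_f[OF that]
    by (simp add: W_def[abs_def])
  have "W (at_height q 1) = (\<lambda>r. q $ xn * W q r)"
  proof
    fix r
    have "(q + r *\<^sub>R axis b 1) $ xn = q $ xn"
      using b by (simp add: axis_def)
    with weighted_pd_at_height[OF qe_xn_off_diag(1)[OF _ b] axis_shift_mem_U[OF q b(1)], of 1 r]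
    show "W (at_height q 1) r = q $ xn * W q r"
      by (simp only: W_def at_height_simps(3)[OF b(1)] mult_1_left)
  qed
  with W'[OF at_height_mem_U[of 1 q]]
  have "(W q has_real_derivative u (at_height q 1) * pd xn f (at_height q 1) / q $ xn) (at 0)"
    using q by (auto simp: at_height_simps mem_U dest: DERIV_cdivide[where c = "q $ xn"])
  from DERIV_unique[OF W'[OF q] this] show ?thesis
    using q by (simp add: mem_U)
qed

lemma pd_xn_f_eq_0:
  assumes q: "q \<in> U"
  shows "pd xn f q = 0"
proof -
  define W where "W p = u p * pd xn f p" for p
  have scaling: "W (at_height p 1) = p $ xn * W p" if "p \<in> U" for p
    using weighted_pd_at_height[OF _ that, of xn 1] qe_xn_xn lam_eq by (simp add: W_def)
  have "W (at_height q 1) = W (at_height q 2)"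
    using weighted_pd_xn_height_invariant[OF at_height_mem_U, of 2 q] by (simp add: W_def at_height_simps)
  moreover have "W (at_height q 1) = 2 * W (at_height q 2)"
    using scaling[OF at_height_mem_U, of 2 q] by (simp add: at_height_simps)
  ultimately have "W (at_height q 1) = 0"
    by simp
  then have "W q = 0"
    using weighted_pd_xn_height_invariant[OF q] by (simp add: W_def)
  then show ?thesis
    by (simp add: W_def)
qed

lemma pd_f_eq_0:
  assumes q: "q \<in> U" and "i \<noteq> tt"
  shows "pd i f q = 0"
proof (cases "i = xn")
  case False
  have "pd i (pd xn f) q = 0"
    using q False
    by (intro pd_eq_0_if_constant_along_axis) (simp_all add: differentiable_pd_f pd_xn_f_eq_0 axis_shift_mem_U)
  with qe_xn_off_diag(2)[OF q False \<open>i \<noteq> tt\<close>] pd_xn_f_eq_0[OF q] q show ?thesis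
    by (simp add: mem_U)
qed (use pd_xn_f_eq_0[OF q] in simp)

lemma f_eq_if_tt_eq:
  assumes q: "q \<in> U" and q': "q' \<in> U" and tt: "q $ tt = q' $ tt"
  shows "f q = f q'"
proof -
  define L where "L s = f (q + s *\<^sub>R (q' - q))" for s
  have L': "(L has_real_derivative 0) (at s)" if "0 \<le> s" "s \<le> 1" for s
  proof -
    have "(q + s *\<^sub>R (q' - q)) $ xn = (1 - s) * q $ xn + s * q' $ xn"
      by (simp add: algebra_simps)
    also have "\<dots> > 0"
      using that q q' by (cases "s = 0") (auto simp: mem_U intro: add_nonneg_pos)
    finally have p: "q + s *\<^sub>R (q' - q) \<in> U"
      by (simp add: mem_U)
    have "frechet_derivative f (at (q + s *\<^sub>R (q' - q))) (q' - q) = 0"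
      unfolding frechet_derivative_pd_expansion[OF differentiable_f[OF p]]
      using tt pd_f_eq_0[OF p] by (intro sum.neutral ballI) (metis diff_self mult_eq_0_iff vector_minus_component)
    with has_real_derivative_along_line[OF differentiable_f[OF p]] show ?thesis
      unfolding L_def by simp
  qed
  have "continuous_on {0..1} L"
    by (rule DERIV_continuous_on[where D = "\<lambda>_. 0"]) (metis atLeastAtMost_iff has_field_derivative_at_within L')
  then have "L 1 = L 0"
    by (rule DERIV_isconst_end[OF zero_less_one]) (simp add: L')
  then show ?thesis
    by (simp add: L_def)
qed

lemma u_tt_ode:
  obtains v' where "\<And>t. ((\<lambda>t. u (axis xn 1 + t *\<^sub>R axis tt 1)) has_real_derivative v' t) (at t)"
    and "\<And>t. (v' has_real_derivative ((real CARD('d) - 2) / m) * u (axis xn 1 + t *\<^sub>R axis tt 1)) (at t)"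
proof -
  define P :: "real \<Rightarrow> real^'d" where "P t = axis xn 1 + t *\<^sub>R axis tt 1" for t
  have P: "P t \<in> U" for t
    using coords by (simp add: P_def mem_U axis_def)
  define v' where "v' t = - u (P t) * pd tt f (P t) / m" for t
  have "((\<lambda>t. u (P t)) has_real_derivative v' t) (at t)" for t
    using has_real_derivative_exp_along_axis[of f "axis xn 1" t tt m] differentiable_f[OF P]
    by (simp add: v'_def P_def)
  moreover have "(v' has_real_derivative ((real CARD('d) - 2) / m) * u (P t)) (at t)" for t
  proof -
    have "((\<lambda>t. u (P t) * pd tt f (P t)) has_real_derivative u (P t) * lam) (at t)"
      using has_real_derivative_weighted_pd[of f "axis xn 1" t tt tt m] qe_tt_tt[OF P]
        differentiable_f[OF P] differentiable_pd_f[OF P]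
      by (simp add: P_def)
    from DERIV_cdivide[OF DERIV_minus[OF this], of m] show ?thesis
      unfolding v'_def[abs_def] lam_eq by (simp add: field_simps)
  qed
  ultimately show ?thesis
    using that unfolding P_def by blast
qed

lemma f_solution:
  defines "\<kappa> \<equiv> real CARD('d) - 2"
  shows "\<exists>c. (\<forall>p\<in>U. f p = sqrt (\<kappa> * m) * p $ tt + c)
    \<or> (\<forall>p\<in>U. f p = - sqrt (\<kappa> * m) * p $ tt + c)
    \<or> (\<exists>a. \<forall>p\<in>U. f p = - m * ln (cosh (sqrt (\<kappa> / m) * p $ tt + a)) + c)"
proof -
  define \<eta> where "\<eta> = sqrt (\<kappa> / m)"
  have \<kappa>: "0 < \<kappa>"
    using dim by (simp add: \<kappa>_def)
  have \<eta>: "0 < \<eta>" "\<eta>^2 = \<kappa> / m" "m * \<eta> = sqrt (\<kappa> * m)"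
    using \<kappa> m_pos by (simp_all add: \<eta>_def real_sqrt_divide real_sqrt_mult field_simps)
  define v where "v t = u (axis xn 1 + t *\<^sub>R axis tt 1)" for t
  obtain v' where d1: "\<And>t. (v has_real_derivative v' t) (at t)"
    and d2: "\<And>t. (v' has_real_derivative \<eta>^2 * v t) (at t)"
    using u_tt_ode unfolding \<eta>(2) \<kappa>_def v_def[abs_def] by blast
  obtain \<alpha> \<beta> where "0 \<le> \<alpha>" "0 \<le> \<beta>" "0 < \<alpha> \<or> 0 < \<beta>"
    and v: "\<And>t. v t = \<alpha> * exp (\<eta> * t) + \<beta> * exp (- (\<eta> * t))"
    using positive_solution_exp_ode[OF \<eta>(1) d1 d2] by (auto simp: v_def)
  have f: "f p = - m * ln (v (p $ tt))" if "p \<in> U" for p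
    using f_eq_if_tt_eq[OF that, of "axis xn 1 + p $ tt *\<^sub>R axis tt 1"] coords m_pos
    by (simp add: v_def mem_U axis_def)
  consider "0 < \<alpha>" "0 < \<beta>" | "\<beta> = 0" "0 < \<alpha>" | "\<alpha> = 0" "0 < \<beta>"
    using \<open>0 \<le> \<alpha>\<close> \<open>0 \<le> \<beta>\<close> \<open>0 < \<alpha> \<or> 0 < \<beta>\<close> by linarith
  then show ?thesis
  proof cases
    case 1
    then have "\<forall>p\<in>U. f p = - m * ln (cosh (\<eta> * p $ tt + (ln (sqrt \<alpha>) - ln (sqrt \<beta>))))
        + (- m * ln (2 * sqrt \<alpha> * sqrt \<beta>))"
      by (simp add: f v exp_combination_eq_cosh ln_mult algebra_simps)
    then show ?thesis
      unfolding \<eta>_def by blast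
  next
    case 2
    then have "\<forall>p\<in>U. f p = - sqrt (\<kappa> * m) * p $ tt + (- m * ln \<alpha>)"
      by (simp add: f v ln_mult \<eta>(3)[symmetric] algebra_simps)
    then show ?thesis
      by blast
  next
    case 3
    then have "\<forall>p\<in>U. f p = sqrt (\<kappa> * m) * p $ tt + (- m * ln \<beta>)"
      by (simp add: f v ln_mult \<eta>(3)[symmetric] algebra_simps)
    then show ?thesis
      by blast
  qed
qed

end

theorem theorem1:
  fixes xn tt :: "'d::finite"
    and f :: "real^'d \<Rightarrow> real"
    and m lam :: real
  defines "n \<equiv> real (CARD('d)) - 1"
  assumes dim: "CARD('d) \<ge> 3"
    and coords: "xn \<noteq> tt"
    and m_pos: "0 < m"
    and smooth: "smooth_on (hypR_domain xn) f"
    and qe: "quasi_einstein (hypR_metric xn tt) (hypR_domain xn) f m lam"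
  shows "lam = - (n - 1) \<and>
    (\<exists>c. (\<forall>p\<in>hypR_domain xn. f p = sqrt ((n - 1) * m) * p $ tt + c)
       \<or> (\<forall>p\<in>hypR_domain xn. f p = - sqrt ((n - 1) * m) * p $ tt + c)
       \<or> (\<exists>a. \<forall>p\<in>hypR_domain xn.
              f p = - m * ln (cosh (sqrt ((n - 1) / m) * p $ tt + a)) + c))"
proof -
  interpret hypR_quasi_einstein xn tt f m lam
    using coords dim m_pos smooth qe by unfold_locales
  have n: "n - 1 = real CARD('d) - 2"
    by (simp add: n_def)
  show ?thesis
    unfolding n using lam_eq f_solution by blast
qed

end
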